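(* Let $a>0$, $\mu\ge 0$, $\lambda>0$, and let $f$ and $g$ be functions of $(x,t)$ such that there are positive constants $C_1,C_2$ with $$\sup\{|f(x,t)|: x\in[0,a],\ t\ge0\}\le C_1,\qquad \inf\{g(x,t): x\in[0,a),\ t\ge 0\}\ge C_2$$ ($g$ may be singular at $x=a$). Consider the equation $$\ddot{x}+\mu\dot{x}+f(x,t)=\lambda g(x,t)$$ with initial condition $x(0)=0$, $\dot{x}(0)=0$, whose physically meaningful solution takes values in $[0,a]$, $x=a$ being the touch-down position. If $\lambda>0$ is sufficiently large, then there is a finite time $t_c>0$, depending on $\lambda$ and $a$, such that the solution climbs monotonically to the touch-down position at $t=t_c$, that is, $$x(t_c)=\lim_{t\to t_c}x(t)=a\quad\text{and}\quad \dot{x}(t)>0\ \text{ for all } t\in(0,t_c).$$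
   Context: This is a normalized equation of motion for an electrostatic actuator with damping constant $\mu\ge0$, a restoring-type force $f$, and a Coulomb-like driving force $\lambda g$ with coupling parameter $\lambda$ resembling the applied voltage; the solution is considered only while $0\le x(t)<a$. *)

theory Defs
  imports "HOL-Analysis.Analysis"
begin

end

theory Submission imports Defs begin

text \<open>As long as the solution has not touched down, the forcing is bounded below:
  \<open>\<lambda> g - f \<ge> k := \<lambda> C\<^sub>2 - C\<^sub>1\<close>, which is positive once \<open>\<lambda> > C\<^sub>1 / C\<^sub>2\<close>.
  Comparing \<open>v = \<dot>x\<close> with the solution of \<open>v' + \<mu> v = k\<close>, \<open>v(0) = 0\<close>, via the
  integrating factor \<open>e\<^sup>\<mu>\<^sup>t\<close> gives \<open>\<dot>x(t) \<ge> k (1 - e\<^sup>-\<^sup>\<mu>\<^sup>t) / \<mu> > 0\<close>. So \<open>x\<close> increases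
  strictly and, its velocity being bounded away from zero after \<open>t = 1\<close>, it
  cannot stay below \<open>a\<close> forever; the first time it reaches \<open>a\<close> is \<open>t\<^sub>c\<close>.\<close>

lemma DERIV_within_nonneg_imp_nondecreasing:
  fixes h h' :: "real \<Rightarrow> real"
  assumes "A \<le> B" and "{A..B} \<subseteq> S"
    and deriv: "\<And>t. t \<in> {A..B} \<Longrightarrow> (h has_real_derivative h' t) (at t within S)"
    and nonneg: "\<And>t. t \<in> {A..B} \<Longrightarrow> h' t \<ge> 0"
  shows "h A \<le> h B"
proof (rule DERIV_nonneg_imp_increasing_open[OF \<open>A \<le> B\<close>])
  fix t assume t: "A < t" "t < B"
  have "{A<..<B} \<subseteq> interior S"
    by (rule interior_maximal) (use \<open>{A..B} \<subseteq> S\<close> in auto)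
  then have "at t within S = at t"
    using t by (intro at_within_interior) auto
  then have "(h has_real_derivative h' t) (at t)"
    using deriv[of t] t by simp
  then show "\<exists>y. (h has_real_derivative y) (at t) \<and> 0 \<le> y"
    using nonneg[of t] t by auto
next
  show "continuous_on {A..B} h"
    unfolding continuous_on_eq_continuous_within
  proof
    fix t assume t: "t \<in> {A..B}"
    have "continuous (at t within S) h"
      using deriv[OF t] by (rule DERIV_continuous)
    then show "continuous (at t within {A..B}) h"
      by (rule continuous_within_subset) fact
  qed
qed

text \<open>The solution of \<open>y' + \<mu> y = 1\<close>, \<open>y(0) = 0\<close>.\<close>

definition step_response :: "real \<Rightarrow> real \<Rightarrow> real" where
  "step_response \<mu> t = (if \<mu> = 0 then t else (1 - exp (- (\<mu> * t))) / \<mu>)"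

lemma step_response_0 [simp]: "step_response \<mu> 0 = 0"
  by (simp add: step_response_def)

lemma step_response_ode: "\<mu> * step_response \<mu> t + exp (- (\<mu> * t)) = 1"
  by (simp add: step_response_def)

lemma step_response_has_real_derivative:
  "(step_response \<mu> has_real_derivative exp (- (\<mu> * t))) (at t within S)"
proof (cases "\<mu> = 0")
  case True
  then have "step_response \<mu> = (\<lambda>t. t)"
    by (simp add: step_response_def [abs_def])
  then show ?thesis
    using True by simp
next
  case False
  have "((\<lambda>t. (1 - exp (- (\<mu> * t))) / \<mu>) has_real_derivative exp (- (\<mu> * t))) (at t within S)"
    using False by (auto intro!: derivative_eq_intros)
  then show ?thesis
    using False by (simp add: step_response_def [abs_def])
qed

lemma step_response_strict_mono: "s < t \<Longrightarrow> step_response \<mu> s < step_response \<mu> t"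
  by (rule DERIV_pos_imp_increasing) (auto intro: step_response_has_real_derivative)

lemma step_response_pos: "t > 0 \<Longrightarrow> step_response \<mu> t > 0"
  using step_response_strict_mono[of 0 t \<mu>] by simp

lemma linear_ode_comparison:
  fixes y y' :: "real \<Rightarrow> real"
  assumes "T \<ge> 0" and "y 0 = 0"
    and deriv: "\<And>t. t \<in> {0..T} \<Longrightarrow> (y has_real_derivative y' t) (at t within {0..})"
    and super: "\<And>t. t \<in> {0..T} \<Longrightarrow> y' t + \<mu> * y t \<ge> k"
  shows "y T \<ge> k * step_response \<mu> T"
proof -
  let ?h = "\<lambda>t. exp (\<mu> * t) * (y t - k * step_response \<mu> t)"
  have "?h 0 \<le> ?h T"
  proof (rule DERIV_within_nonneg_imp_nondecreasing
      [where h' = "\<lambda>t. exp (\<mu> * t) * (y' t + \<mu> * y t - k)", OF \<open>T \<ge> 0\<close>])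
    fix t assume t: "t \<in> {0..T}"
    have "(?h has_real_derivative exp (\<mu> * t) * \<mu> * (y t - k * step_response \<mu> t)
          + exp (\<mu> * t) * (y' t - k * exp (- (\<mu> * t)))) (at t within {0..})"
      using DERIV_mult[OF DERIV_cmult[OF DERIV_ident, THEN DERIV_chain2[OF DERIV_exp], of \<mu> t]
          DERIV_diff[OF deriv[OF t] DERIV_cmult[OF step_response_has_real_derivative, of k]]]
      by (simp add: algebra_simps)
    moreover have "exp (\<mu> * t) * \<mu> * (y t - k * step_response \<mu> t)
          + exp (\<mu> * t) * (y' t - k * exp (- (\<mu> * t)))
        = exp (\<mu> * t) * (y' t + \<mu> * y t - k)"
      using step_response_ode[of \<mu> t] by algebra
    ultimately show "(?h has_real_derivative exp (\<mu> * t) * (y' t + \<mu> * y t - k)) (at t within {0..})"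
      by simp
    show "exp (\<mu> * t) * (y' t + \<mu> * y t - k) \<ge> 0"
      using super[OF t] by simp
  qed auto
  then show ?thesis
    using \<open>y 0 = 0\<close> by (simp add: zero_le_mult_iff)
qed

lemma first_hitting_time:
  fixes x :: "real \<Rightarrow> real"
  assumes cont: "continuous_on {0..} x" and below: "\<And>t. t \<ge> 0 \<Longrightarrow> x t \<le> a"
    and "x 0 < a" and hits: "\<exists>t\<ge>0. x t = a"
  obtains tc where "tc > 0" "x tc = a" "(x \<longlongrightarrow> a) (at_left tc)" "\<forall>t\<in>{0..<tc}. x t < a"
proof -
  define S where "S = {t \<in> {0..}. x t = a}"
  have "S \<noteq> {}" and bdd: "bdd_below S"
    using hits by (auto simp: S_def intro: bdd_belowI[of _ 0])
  moreover have "closed S"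
    unfolding S_def by (rule continuous_closed_preimage_constant[OF cont]) simp
  ultimately have "Inf S \<in> S"
    by (rule closed_contains_Inf)
  then have xtc: "x (Inf S) = a" and "Inf S \<ge> 0"
    by (auto simp: S_def)
  then have tc_pos: "Inf S > 0"
    using \<open>x 0 < a\<close> by (cases "Inf S = 0") auto
  have "\<forall>t\<in>{0..<Inf S}. x t < a"
    using below cInf_lower[OF _ bdd] by (force simp: S_def)
  moreover have "isCont x (Inf S)"
    by (rule continuous_on_interior[OF cont]) (use tc_pos in auto)
  then have "(x \<longlongrightarrow> a) (at_left (Inf S))"
    using xtc by (simp add: isCont_def filterlim_at_split)
  ultimately show ?thesis
    using that tc_pos xtc by blast
qed

lemma velocity_lower_bound_before_touchdown:
  fixes x xd xdd :: "real \<Rightarrow> real" and f g :: "real \<Rightarrow> real \<Rightarrow> real"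
  assumes f_bound: "\<forall>y\<in>{0..a}. \<forall>t\<ge>0. \<bar>f y t\<bar> \<le> C1"
    and g_bound: "\<forall>y\<in>{0..<a}. \<forall>t\<ge>0. g y t \<ge> C2"
    and "lam \<ge> 0" and x_nonneg: "\<forall>t\<ge>0. 0 \<le> x t" and "xd 0 = 0"
    and ode: "\<forall>t\<ge>0. (\<forall>s\<in>{0..t}. x s < a) \<longrightarrow>
             (x has_real_derivative xd t) (at t within {0..})
           \<and> (xd has_real_derivative xdd t) (at t within {0..})
           \<and> xdd t + \<mu> * xd t + f (x t) t = lam * g (x t) t"
    and "T \<ge> 0" and before: "\<forall>s\<in>{0..T}. x s < a"
  shows "xd T \<ge> (lam * C2 - C1) * step_response \<mu> T"
proof (rule linear_ode_comparison[of T xd xdd, OF \<open>T \<ge> 0\<close> \<open>xd 0 = 0\<close>])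
  fix t assume t: "t \<in> {0..T}"
  then have before_t: "\<forall>s\<in>{0..t}. x s < a" and xt: "x t \<in> {0..<a}"
    using before x_nonneg by auto
  have "\<bar>f (x t) t\<bar> \<le> C1" and "lam * g (x t) t \<ge> lam * C2"
    using f_bound g_bound xt t \<open>lam \<ge> 0\<close> by (auto intro: mult_left_mono)
  moreover have "(xd has_real_derivative xdd t) (at t within {0..})"
    and "xdd t + \<mu> * xd t = lam * g (x t) t - f (x t) t"
    using ode before_t t by auto
  ultimately show "(xd has_real_derivative xdd t) (at t within {0..})"
    and "xdd t + \<mu> * xd t \<ge> lam * C2 - C1"
    by auto
qed

lemma touchdown_reached:
  fixes x xd :: "real \<Rightarrow> real"
  assumes "k > 0" and x_range: "\<forall>t\<ge>0. 0 \<le> x t \<and> x t \<le> a"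
    and deriv: "\<And>t. t \<ge> 0 \<Longrightarrow> \<forall>s\<in>{0..t}. x s < a \<Longrightarrow>
        (x has_real_derivative xd t) (at t within {0..})"
    and velocity: "\<And>t. t \<ge> 0 \<Longrightarrow> \<forall>s\<in>{0..t}. x s < a \<Longrightarrow>
        xd t \<ge> k * step_response \<mu> t"
  shows "\<exists>t\<ge>0. x t = a"
proof (rule ccontr)
  assume "\<not> ?thesis"
  then have below: "\<forall>s\<in>{0..t}. x s < a" for t
    using x_range by force
  define c where "c = k * step_response \<mu> 1"
  have "c > 0"
    using \<open>k > 0\<close> step_response_pos[of 1 \<mu>] by (simp add: c_def)
  have "a \<ge> 0"
    using x_range by force
  define T where "T = a / c + 2"
  have "1 \<le> T"
    using \<open>a \<ge> 0\<close> \<open>c > 0\<close> by (simp add: T_def)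
  have "x 1 - c * 1 \<le> x T - c * T"
  proof (rule DERIV_within_nonneg_imp_nondecreasing[where h' = "\<lambda>t. xd t - c", OF \<open>1 \<le> T\<close>])
    fix t assume t: "t \<in> {1..T}"
    show "((\<lambda>t. x t - c * t) has_real_derivative xd t - c) (at t within {0..})"
      using deriv[OF _ below, of t] t by (auto intro!: derivative_eq_intros)
    have "c \<le> k * step_response \<mu> t"
      using t \<open>k > 0\<close> step_response_strict_mono[of 1 t \<mu>]
      by (cases "t = 1") (auto simp: c_def)
    then show "xd t - c \<ge> 0"
      using velocity[OF _ below, of t] t by simp
  qed auto
  moreover have "c * T = a + 2 * c"
    using \<open>c > 0\<close> by (simp add: T_def field_simps)
  moreover have "x 1 \<ge> 0" and "x T \<le> a"
    using x_range \<open>1 \<le> T\<close> by auto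
  ultimately show False
    using \<open>c > 0\<close> by linarith
qed

theorem theorem3:
  fixes a \<mu> C1 C2 :: real and f g :: "real \<Rightarrow> real \<Rightarrow> real"
  assumes a_pos: "a > 0" and mu_nonneg: "\<mu> \<ge> 0"
    and C1_pos: "C1 > 0" and C2_pos: "C2 > 0"
    and f_bound: "\<forall>y\<in>{0..a}. \<forall>t\<ge>0. \<bar>f y t\<bar> \<le> C1"
    and g_bound: "\<forall>y\<in>{0..<a}. \<forall>t\<ge>0. g y t \<ge> C2"
  shows "\<exists>\<Lambda>. \<forall>lam>\<Lambda>. lam > 0 \<longrightarrow>
    (\<forall>x xd xdd :: real \<Rightarrow> real.
       continuous_on {0..} x
       \<and> (\<forall>t\<ge>0. 0 \<le> x t \<and> x t \<le> a)
       \<and> x 0 = 0 \<and> xd 0 = 0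
       \<and> (\<forall>t\<ge>0. (\<forall>s\<in>{0..t}. x s < a) \<longrightarrow>
             (x has_real_derivative xd t) (at t within {0..})
           \<and> (xd has_real_derivative xdd t) (at t within {0..})
           \<and> xdd t + \<mu> * xd t + f (x t) t = lam * g (x t) t)
     \<longrightarrow> (\<exists>tc>0. x tc = a \<and> (x \<longlongrightarrow> a) (at_left tc)
           \<and> (\<forall>t\<in>{0..<tc}. x t < a)
           \<and> (\<forall>t\<in>{0<..<tc}. xd t > 0)))"
proof (rule exI[of _ "C1 / C2"], intro allI impI)
  fix lam :: real and x xd xdd :: "real \<Rightarrow> real"
  assume "C1 / C2 < lam" and "0 < lam"
  assume hyps: "continuous_on {0..} x \<and> (\<forall>t\<ge>0. 0 \<le> x t \<and> x t \<le> a) \<and> x 0 = 0 \<and> xd 0 = 0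
       \<and> (\<forall>t\<ge>0. (\<forall>s\<in>{0..t}. x s < a) \<longrightarrow>
             (x has_real_derivative xd t) (at t within {0..})
           \<and> (xd has_real_derivative xdd t) (at t within {0..})
           \<and> xdd t + \<mu> * xd t + f (x t) t = lam * g (x t) t)"
  define k where "k = lam * C2 - C1"
  have "k > 0"
    using \<open>C1 / C2 < lam\<close> C2_pos by (simp add: k_def field_simps)
  have velocity: "xd t \<ge> k * step_response \<mu> t" if "t \<ge> 0" "\<forall>s\<in>{0..t}. x s < a" for t
    unfolding k_def using hyps that \<open>0 < lam\<close>
    by (intro velocity_lower_bound_before_touchdown[OF f_bound g_bound]) auto
  have touchdown: "\<exists>t\<ge>0. x t = a"
    using hyps by (intro touchdown_reached[OF \<open>k > 0\<close> _ _ velocity]) auto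
  have "x 0 < a"
    using hyps a_pos by simp
  obtain tc where "tc > 0" "x tc = a" "(x \<longlongrightarrow> a) (at_left tc)"
    and before: "\<forall>t\<in>{0..<tc}. x t < a"
    by (rule first_hitting_time[of x a]) (use hyps touchdown \<open>x 0 < a\<close> in auto)
  moreover have "xd t > 0" if "t \<in> {0<..<tc}" for t
  proof -
    have "0 < k * step_response \<mu> t"
      using that \<open>k > 0\<close> step_response_pos by simp
    also have "\<dots> \<le> xd t"
      using that before by (intro velocity) auto
    finally show ?thesis .
  qed
  ultimately show "\<exists>tc>0. x tc = a \<and> (x \<longlongrightarrow> a) (at_left tc)
           \<and> (\<forall>t\<in>{0..<tc}. x t < a) \<and> (\<forall>t\<in>{0<..<tc}. xd t > 0)"
    by blast
qed

end
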